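(* Let $d,a,b$ be positive integers, $r=(d+2b)/d$, $R=(a+d)/d$, and assume $R\ge 3r$. Define, for $t\in\mathbb C\setminus\{\pm1,\pm r\}$, \[ \Phi(t)=d\log|t+r|-d\log|t-r|+(a+d)\bigl(\log|t-1|-\log|t+1|\bigr). \] Then for each $0\le\theta\le\pi/2$ there is a unique $u_\theta>0$ with $\Phi(r+u_\theta e^{i\theta})=0$; moreover $\Phi(r+ue^{i\theta})>0$ for $0<u<u_\theta$ and $\Phi(r+ue^{i\theta})<0$ for $u>u_\theta$. *)

theory Defs
  imports "HOL-Analysis.Analysis"
begin

definition Phi :: "nat \<Rightarrow> nat \<Rightarrow> nat \<Rightarrow> complex \<Rightarrow> real" where
  "Phi d a b t = (let r = complex_of_real ((real d + 2 * real b) / real d) in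
     real d * ln (cmod (t + r)) - real d * ln (cmod (t - r))
     + (real a + real d) * (ln (cmod (t - 1)) - ln (cmod (t + 1))))"

end

theory Submission
  imports Defs
begin

(* Write r = (d+2b)/d, R = (a+d)/d and c = cos theta >= 0.  Along the ray
   t = r + u e^{i theta} each |t - k| is the square root of the quadratic
   E k' c u = u^2 + 2 k' c u + k'^2, so for u > 0 we get Phi(t) = (d/2) psi(u) with
     psi(u) = ln E(2r) - 2 ln u + R (ln E(r-1) - ln E(r+1)).
   Clearing denominators, psi'(u) = -K(u) / (E(2r) E(r-1) E(r+1)), where K is a Laurent
   polynomial whose positive-power coefficients are <= 0 (this is where R >= 3r is used)
   and whose 1/u coefficient is > 0; hence K is strictly decreasing on (0,oo).  So psi
   first decreases and then (possibly) increases.  Moreover psi > 0 near 0 and psi < 0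
   arbitrarily far out, both obtained from ln x <= x - 1.
   The file first proves an abstract sign-change lemma: a function whose derivative has
   the sign of -K for a strictly decreasing K, which is positive somewhere and negative
   arbitrarily far out, changes sign exactly once on (0,oo). *)

section \<open>Functions with a single sign change on the positive half-line\<close>

definition crosses_zero_at :: "(real \<Rightarrow> real) \<Rightarrow> real \<Rightarrow> bool" where
  "crosses_zero_at f u \<longleftrightarrow> u > 0 \<and> f u = 0
     \<and> (\<forall>v. 0 < v \<and> v < u \<longrightarrow> f v > 0) \<and> (\<forall>v. v > u \<longrightarrow> f v < 0)"

lemma crosses_zero_at_unique:
  assumes "crosses_zero_at f y" and "crosses_zero_at f z"
  shows "y = z"
  using assms unfolding crosses_zero_at_def by (metis less_irrefl linorder_neqE_linordered_idom)

lemma crosses_zero_at_scale: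
  assumes "k > 0" and "\<And>v. v > 0 \<Longrightarrow> g v = k * f v"
  shows "crosses_zero_at g u \<longleftrightarrow> crosses_zero_at f u"
proof -
  have "g v = 0 \<longleftrightarrow> f v = 0" "g v > 0 \<longleftrightarrow> f v > 0" "g v < 0 \<longleftrightarrow> f v < 0" if "v > 0" for v
    using assms that by (auto simp: zero_less_mult_iff mult_less_0_iff)
  then show ?thesis
    unfolding crosses_zero_at_def by (meson less_trans)
qed

text \<open>The abstract sign-change principle: the derivative of f has the sign of -K with K
  strictly decreasing, so f decreases while K > 0 and increases once K \<le> 0.\<close>
lemma unique_zero_crossing:
  fixes f f' K :: "real \<Rightarrow> real"
  assumes deriv: "\<And>u. u > 0 \<Longrightarrow> (f has_real_derivative f' u) (at u)"
    and K_decr: "\<And>a b. 0 < a \<Longrightarrow> a < b \<Longrightarrow> K b < K a"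
    and sign_neg: "\<And>u. u > 0 \<Longrightarrow> K u > 0 \<Longrightarrow> f' u < 0"
    and sign_pos: "\<And>u. u > 0 \<Longrightarrow> K u < 0 \<Longrightarrow> f' u > 0"
    and small: "\<exists>p>0. f p > 0"
    and large: "\<And>v. \<exists>w>v. f w < 0"
  shows "\<exists>!u. crosses_zero_at f u"
proof -
  have cont: "continuous_on {a..b} f" if "0 < a" for a b
    using that by (intro continuous_at_imp_continuous_on ballI DERIV_isCont[OF deriv]) auto
  have incr: "f a < f b" if "0 < y" "K y \<le> 0" "y \<le> a" "a < b" for y a b
  proof (rule DERIV_pos_imp_increasing_open[OF \<open>a < b\<close> _ cont])
    fix x assume "a < x" "x < b"
    then show "\<exists>D. (f has_real_derivative D) (at x) \<and> D > 0"
      using that K_decr[of y x] by (intro exI[of _ "f' x"] conjI deriv sign_pos) auto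
  qed (use that in auto)
  have decr: "f b < f a" if "0 < a" "a < b" "K b \<ge> 0" for a b
  proof (rule DERIV_neg_imp_decreasing_open[OF \<open>a < b\<close> _ cont])
    fix x assume "a < x" "x < b"
    then show "\<exists>D. (f has_real_derivative D) (at x) \<and> D < 0"
      using that K_decr[of x b] by (intro exI[of _ "f' x"] conjI deriv sign_neg) auto
  qed (use that in auto)
  obtain p where p: "p > 0" "f p > 0" using small by blast
  obtain w where w: "w > p" "f w < 0" using large by blast
  obtain z where z: "p \<le> z" "z \<le> w" "f z = 0"
    using IVT2'[of f w 0 p] cont[OF p(1)] p w by auto
  have "K z > 0"
  proof (rule ccontr)
    assume "\<not> K z > 0"
    moreover obtain w' where "w' > z" "f w' < 0" using large by blast
    ultimately show False using incr[of z z w'] z p by auto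
  qed
  have "crosses_zero_at f z"
    unfolding crosses_zero_at_def
  proof (intro conjI allI impI)
    fix v assume "0 < v \<and> v < z"
    then show "f v > 0" using decr[of v z] \<open>K z > 0\<close> z by auto
  next
    fix v assume "v > z"
    show "f v < 0"
    proof (cases "K v > 0")
      case True
      then show ?thesis using decr[of z v] \<open>v > z\<close> z p by auto
    next
      case False
      obtain w' where "w' > v" "f w' < 0" using large by blast
      then show ?thesis using incr[of v v w'] False \<open>v > z\<close> z p by auto
    qed
  qed (use z p in auto)
  then show ?thesis using crosses_zero_at_unique by blast
qed

section \<open>Distances along a ray\<close>

text \<open>E k c u is the squared distance |k + u e^{i theta}|^2 with c = cos theta.\<close>
definition E :: "real \<Rightarrow> real \<Rightarrow> real \<Rightarrow> real" where
  "E k c u = u^2 + 2*k*c*u + k^2"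

lemma E_pos: "k > 0 \<Longrightarrow> c \<ge> 0 \<Longrightarrow> u > 0 \<Longrightarrow> E k c u > 0"
  unfolding E_def by (simp add: add_pos_nonneg add_nonneg_pos)

lemma cmod_ray: "cmod (complex_of_real k + complex_of_real u * cis t) = sqrt (E k (cos t) u)"
proof -
  have "(k + u * x)^2 + (u * y)^2 = k^2 + 2*k*x*u + u^2*(y^2 + x^2)" for x y :: real
    by (simp add: algebra_simps power2_eq_square)
  from this[of "cos t" "sin t"] have "(k + u * cos t)^2 + (u * sin t)^2 = E k (cos t) u"
    by (simp add: E_def)
  then show ?thesis by (simp add: norm_complex_def)
qed

section \<open>The radial function psi and its derivative\<close>

text \<open>psi is 2/d times Phi along the ray from r in direction theta (c = cos theta).\<close>
definition psi :: "real \<Rightarrow> real \<Rightarrow> real \<Rightarrow> real \<Rightarrow> real" where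
  "psi r R c u = ln (E (2*r) c u) - 2 * ln u + R * (ln (E (r-1) c u) - ln (E (r+1) c u))"

text \<open>The numerator of -psi' after clearing the (positive) denominators.\<close>
definition K :: "real \<Rightarrow> real \<Rightarrow> real \<Rightarrow> real \<Rightarrow> real" where
  "K r R c u = 4*c*(r-R)*u^4 + 8*r*(r-R)*(1+2*c^2)*u^3
     + (4*c*R + 8*r*c - 16*r*c^3 - 52*r^2*c*R + 40*r^3*c + 16*r^3*c^3)*u^2
     + (16*r*c^2*R + 16*r^2 - 48*r^2*c^2 - 32*r^3*R - 16*r^3*c^2*R + 16*r^4 + 48*r^4*c^2)*u
     + (4*r*c + 16*r^2*c*R - 40*r^3*c - 16*r^4*c*R + 36*r^5*c)
     + 8*r^2*(r^2-1)^2/u"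

lemma psi_has_derivative:
  assumes "r > 1" "c \<ge> 0" "u > 0"
  shows "(psi r R c has_real_derivative
           - K r R c u / (E (2*r) c u * E (r-1) c u * E (r+1) c u)) (at u)"
proof -
  define A B C where "A = E (2*r) c u" and "B = E (r-1) c u" and "C = E (r+1) c u"
  have pos: "A > 0" "B > 0" "C > 0"
    using assms by (auto intro!: E_pos simp: A_def B_def C_def)
  have raw: "(psi r R c has_real_derivative
       (2*u+4*r*c)/A - 2/u + R*((2*u+2*(r-1)*c)/B - (2*u+2*(r+1)*c)/C)) (at u)"
    unfolding psi_def[abs_def] A_def B_def C_def
    by (rule derivative_eq_intros refl | use pos assms in \<open>simp add: A_def B_def C_def E_def\<close>)+
  have "((2*u+4*r*c)/A - 2/u + R*((2*u+2*(r-1)*c)/B - (2*u+2*(r+1)*c)/C)) * (A*B*C*u)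
      = (2*u+4*r*c)*B*C*u - 2*A*B*C + R*((2*u+2*(r-1)*c)*A*C*u - (2*u+2*(r+1)*c)*A*B*u)"
    (is "?D * _ = _")
    using pos assms by (simp add: field_simps)
  also have "\<dots> = - K r R c u * u"
    unfolding A_def B_def C_def E_def K_def using assms
    by (simp add: field_simps) (simp add: algebra_simps eval_nat_numeral)
  finally have "(?D * (A*B*C)) * u = - K r R c u * u" by (simp add: ac_simps)
  then have "?D * (A*B*C) = - K r R c u"
    using assms(3) by (metis mult_cancel_right less_irrefl mult_minus_left)
  then have "?D = - K r R c u / (A*B*C)"
    using pos by (metis divide_minus_left nonzero_mult_div_cancel_right mult_eq_0_iff less_irrefl)
  then show ?thesis using raw by (simp add: A_def B_def C_def)
qed

section \<open>K is strictly decreasing\<close>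

lemma laurent_strict_antimono:
  fixes p4 p3 p2 p1 p0 q a b :: real
  assumes "p4 \<le> 0" "p3 \<le> 0" "p2 \<le> 0" "p1 \<le> 0" "q > 0" and "0 < a" "a < b"
  shows "p4*b^4 + p3*b^3 + p2*b^2 + p1*b + p0 + q/b
       < p4*a^4 + p3*a^3 + p2*a^2 + p1*a + p0 + q/a"
proof -
  have "p4*b^4 \<le> p4*a^4" "p3*b^3 \<le> p3*a^3" "p2*b^2 \<le> p2*a^2" "p1*b \<le> p1*a"
    using assms by (auto intro!: mult_left_mono_neg power_mono)
  moreover have "q/b < q/a" using assms by (intro divide_strict_left_mono) auto
  ultimately show ?thesis by linarith
qed

lemma K_coeff2_nonpos:
  fixes r R c :: real
  assumes r: "r > 1" and R: "R \<ge> 3*r" and c: "0 \<le> c" "c \<le> 1"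
  shows "4*c*R + 8*r*c - 16*r*c^3 - 52*r^2*c*R + 40*r^3*c + 16*r^3*c^3 \<le> 0"
proof -
  have rr: "1 < r*r" using less_1_mult[OF r r] .
  have "R*(1-13*r^2) \<le> 3*r*(1-13*r^2)"
    using R r rr by (intro mult_right_mono_neg) (auto simp: power2_eq_square)
  moreover have "c^2*(4*r*(r^2-1)) \<le> 4*r*(r^2-1)"
  proof -
    have "c^2 \<le> 1" using c by (simp add: power_le_one)
    moreover have "0 \<le> 4*r*(r^2-1)" using r rr by (simp add: power2_eq_square)
    ultimately show ?thesis using mult_right_mono[of "c^2" 1] by fastforce
  qed
  moreover have "r*(1 - 25*(r*r)) < 0" using r rr by (intro mult_pos_neg) auto
  ultimately have "R*(1-13*r^2) + 2*r - 4*r*c^2 + 10*r^3 + 4*r^3*c^2 \<le> 0"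
    by (simp add: algebra_simps power3_eq_cube power2_eq_square)
  from mult_left_mono[OF this c(1)] show ?thesis
    by (simp add: algebra_simps power2_eq_square power3_eq_cube)
qed

lemma K_coeff1_nonpos:
  fixes r R c :: real
  assumes r: "r > 1" and R: "R \<ge> 3*r" and c: "0 \<le> c" "c \<le> 1"
  shows "16*r*c^2*R + 16*r^2 - 48*r^2*c^2 - 32*r^3*R - 16*r^3*c^2*R + 16*r^4 + 48*r^4*c^2 \<le> 0"
proof -
  have rr: "1 < r*r" using less_1_mult[OF r r] .
  have "c^2 \<le> 1" using c by (simp add: power_le_one)
  moreover have "0 \<le> r^2*c^2" by simp
  moreover have "r^2 = r*r" by (simp add: power2_eq_square)
  ultimately have neg: "c^2 - 2*r^2 - r^2*c^2 \<le> 0" using rr by linarith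
  have "R*(c^2 - 2*r^2 - r^2*c^2) \<le> 3*r*(c^2 - 2*r^2 - r^2*c^2)"
    using R neg by (intro mult_right_mono_neg) auto
  moreover have "r*(1 - 5*(r*r)) < 0" using r rr by (intro mult_pos_neg) auto
  ultimately have "R*(c^2 - 2*r^2 - r^2*c^2) + r - 3*r*c^2 + r^3 + 3*r^3*c^2 \<le> 0"
    by (simp add: algebra_simps power3_eq_cube power2_eq_square)
  from mult_left_mono[OF this, of "16*r"] r show ?thesis
    by (simp add: algebra_simps power2_eq_square power3_eq_cube power4_eq_xxxx)
qed

lemma K_strict_antimono:
  fixes r R c :: real
  assumes r: "r > 1" and R: "R \<ge> 3*r" and c: "0 \<le> c" "c \<le> 1" and "0 < a" "a < b"
  shows "K r R c b < K r R c a"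
  unfolding K_def
proof (rule laurent_strict_antimono)
  show "4*c*(r-R) \<le> 0" using r R c by (simp add: mult_nonneg_nonpos)
  have "8*r*(r-R) \<le> 0" using r R by (simp add: mult_nonneg_nonpos)
  then show "8*r*(r-R)*(1+2*c^2) \<le> 0" by (simp add: mult_nonpos_nonneg)
  have "r^2 - 1 > 0" using r by (simp add: one_less_power)
  then show "8*r^2*(r^2-1)^2 > 0" using r by (intro mult_pos_pos zero_less_power) auto
qed (use K_coeff2_nonpos[OF r R c] K_coeff1_nonpos[OF r R c] assms in auto)

section \<open>Behaviour of psi near 0 and near infinity\<close>

text \<open>Upper bound from ln x \<le> x - 1 applied to both logarithmic differences.\<close>
lemma psi_upper:
  assumes r: "r > 1" and R: "R \<ge> 0" and c: "c \<ge> 0" and u: "u > 0"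
  shows "psi r R c u \<le> 4*(c*u+r)*r/u^2 - R * (4*(c*u+r)/E (r+1) c u)"
proof -
  define E1 E2 E3 where "E1 = E (2*r) c u" and "E2 = E (r+1) c u" and "E3 = E (r-1) c u"
  have pos: "E1 > 0" "E2 > 0" "E3 > 0"
    using r c u by (auto intro!: E_pos simp: E1_def E2_def E3_def)
  have "ln E1 - 2 * ln u = ln (E1/u^2)" using pos u by (simp add: ln_divide_pos ln_realpow)
  also have "\<dots> \<le> E1/u^2 - 1" using pos u by (intro ln_le_minus_one) simp
  also have "\<dots> = 4*(c*u+r)*r/u^2"
    using u by (simp add: E1_def E_def field_simps power2_eq_square)
  finally have b1: "ln E1 - 2 * ln u \<le> 4*(c*u+r)*r/u^2" .
  have "ln E3 - ln E2 = ln (E3/E2)" using pos by (simp add: ln_divide_pos)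
  also have "\<dots> \<le> E3/E2 - 1" using pos by (intro ln_le_minus_one) simp
  also have "\<dots> = - (4*(c*u+r)/E2)"
    using pos by (simp add: E2_def E3_def E_def field_simps power2_eq_square)
  finally have "R * (ln E3 - ln E2) \<le> R * - (4*(c*u+r)/E2)" using R by (rule mult_left_mono)
  then show ?thesis using b1 by (simp add: psi_def E1_def E2_def E3_def)
qed

lemma psi_eventually_negative:
  assumes r: "r > 1" and R: "R \<ge> 3*r" and c: "0 \<le> c" "c \<le> 1"
  shows "\<exists>w>v. psi r R c w < 0"
proof -
  define w where "w = max v 0 + 2*(r+1) + 1"
  have w: "w > v" "w > 2*(r+1)" "w > 0" using r by (auto simp: w_def)
  define E2 where "E2 = E (r+1) c w"
  have E2: "E2 > 0" using r c w by (auto intro!: E_pos simp: E2_def)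
  text \<open>For w > 2(r+1) we have E(r+1) < 3 w^2, hence r E(r+1) < R w^2.\<close>
  have "2*(r+1)*c*w \<le> 2*(r+1)*w" using c r w by (simp add: mult_left_le)
  moreover have "2*(r+1)*w < w*w" using w by (intro mult_strict_right_mono) auto
  moreover have "(r+1)*(r+1) < w*w" using w r by (intro mult_strict_mono) auto
  ultimately have "E2 < 3*w^2" by (simp add: E2_def E_def power2_eq_square)
  then have "r * E2 < r * (3*w^2)" using r by simp
  also have "\<dots> \<le> R * w^2" using mult_right_mono[OF R, of "w^2"] by simp
  finally have key: "r * E2 < R * w^2" .
  have cw: "c*w + r > 0" using c w r by (simp add: add_nonneg_pos)
  have "4*(c*w+r)*r/w^2 = (4*(c*w+r))*(r*E2)/(w^2*E2)" using E2 by simp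
  also have "\<dots> < (4*(c*w+r))*(R*w^2)/(w^2*E2)"
    using key cw E2 w by (intro divide_strict_right_mono mult_strict_left_mono) auto
  also have "\<dots> = R * (4*(c*w+r)/E2)" using w by simp
  finally have "4*(c*w+r)*r/w^2 < R * (4*(c*w+r)/E2)" .
  then show ?thesis
    using psi_upper[of r R c w] r R c w by (intro exI[of _ w]) (simp add: E2_def)
qed

text \<open>Lower bound for 0 < u \<le> 1: E(2r) \<ge> 4r^2 and E(r+1)/E(r-1) - 1 \<le> 4(1+r)/(r-1)^2.\<close>
lemma psi_lower:
  assumes r: "r > 1" and R: "R \<ge> 0" and c: "0 \<le> c" "c \<le> 1" and u: "0 < u" "u \<le> 1"
  shows "psi r R c u \<ge> ln (4*r^2) - 2 * ln u - R * ((4+4*r)/(r-1)^2)"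
proof -
  define E1 E2 E3 where "E1 = E (2*r) c u" and "E2 = E (r+1) c u" and "E3 = E (r-1) c u"
  have pos: "E1 > 0" "E2 > 0" "E3 > 0"
    using r c u by (auto intro!: E_pos simp: E1_def E2_def E3_def)
  have b1: "ln (4*r^2) \<le> ln E1"
    using u c r pos by (subst ln_le_cancel_iff) (auto simp: E1_def E_def power2_eq_square)
  have "ln E2 - ln E3 = ln (E2/E3)" using pos by (simp add: ln_divide_pos)
  also have "\<dots> \<le> E2/E3 - 1" using pos by (intro ln_le_minus_one) simp
  also have "\<dots> = (4*c*u + 4*r)/E3"
    using pos by (simp add: E2_def E3_def E_def field_simps power2_eq_square)
  also have "\<dots> \<le> (4+4*r)/(r-1)^2"
  proof (rule frac_le)
    have "c*u \<le> 1" using c u by (simp add: mult_le_one)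
    then show "4*c*u + 4*r \<le> 4+4*r" by simp
  qed (use r u c in \<open>auto simp: E3_def E_def\<close>)
  finally have "R * (ln E2 - ln E3) \<le> R * ((4+4*r)/(r-1)^2)" using R by (rule mult_left_mono)
  then show ?thesis using b1 by (simp add: psi_def E1_def E2_def E3_def algebra_simps)
qed

text \<open>psi tends to +oo at 0, since the lower bound contains -2 ln u.\<close>
lemma psi_positive_near_zero:
  assumes r: "r > 1" and R: "R \<ge> 0" and c: "0 \<le> c" "c \<le> 1"
  shows "\<exists>p>0. psi r R c p > 0"
proof -
  define M where "M = (ln (4*r^2) - R*((4+4*r)/(r-1)^2))/2 - 1"
  define p where "p = min 1 (exp M)"
  have p: "0 < p" "p \<le> 1" by (auto simp: p_def)
  have "ln p \<le> ln (exp M)" using p by (subst ln_le_cancel_iff) (auto simp: p_def)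
  then have "ln (4*r^2) - 2 * ln p - R * ((4+4*r)/(r-1)^2) \<ge> 2"
    by (simp add: M_def field_simps)
  then show ?thesis using psi_lower[OF r R c p] p by (intro exI[of _ p]) auto
qed

lemma psi_crosses_zero_once:
  assumes r: "r > 1" and R: "R \<ge> 3*r" and c: "0 \<le> c" "c \<le> 1"
  shows "\<exists>!u. crosses_zero_at (psi r R c) u"
proof (rule unique_zero_crossing[where K = "K r R c"])
  let ?D = "\<lambda>u. E (2*r) c u * E (r-1) c u * E (r+1) c u"
  have D: "?D u > 0" if "u > 0" for u using that r c by (simp add: E_pos)
  show "\<And>u. u > 0 \<Longrightarrow> (psi r R c has_real_derivative - K r R c u / ?D u) (at u)"
    using psi_has_derivative r c by blast
  show "\<And>u. u > 0 \<Longrightarrow> K r R c u > 0 \<Longrightarrow> - K r R c u / ?D u < 0"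
    using D by (simp add: divide_pos_pos)
  show "\<And>u. u > 0 \<Longrightarrow> K r R c u < 0 \<Longrightarrow> - K r R c u / ?D u > 0"
    using D by (simp add: divide_neg_pos)
qed (use K_strict_antimono psi_positive_near_zero psi_eventually_negative assms in auto)

lemma Phi_ray_eq_psi:
  fixes d a b :: nat and t u :: real
  assumes d: "d > 0" and b: "b > 0" and u: "u > 0" and t: "0 \<le> cos t"
  defines "r \<equiv> (real d + 2 * real b) / real d"
  shows "Phi d a b (complex_of_real r + complex_of_real u * cis t)
      = real d / 2 * psi r ((real a + real d) / real d) (cos t) u"
proof -
  have "r > 1" using d b by (simp add: r_def field_simps)
  then have pos: "E (2*r) (cos t) u > 0" "E (r-1) (cos t) u > 0" "E (r+1) (cos t) u > 0"
    using t u by (auto intro!: E_pos)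
  have shifts: "complex_of_real r + complex_of_real u * cis t + complex_of_real r
      = complex_of_real (2*r) + complex_of_real u * cis t"
    "complex_of_real r + complex_of_real u * cis t - 1
      = complex_of_real (r-1) + complex_of_real u * cis t"
    "complex_of_real r + complex_of_real u * cis t + 1
      = complex_of_real (r+1) + complex_of_real u * cis t" by simp_all
  have "cmod (complex_of_real r + complex_of_real u * cis t - complex_of_real r) = u"
    using u by (simp add: norm_mult)
  then have "Phi d a b (complex_of_real r + complex_of_real u * cis t)
      = real d * (ln (E (2*r) (cos t) u) / 2) - real d * ln u
        + (real a + real d) * (ln (E (r-1) (cos t) u) / 2 - ln (E (r+1) (cos t) u) / 2)"
    unfolding Phi_def Let_def r_def[symmetric] shifts cmod_ray using pos by (simp add: ln_sqrt)
  also have "\<dots> = real d / 2 * psi r ((real a + real d) / real d) (cos t) u"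
    using d u by (simp add: psi_def field_simps ln_realpow)
  finally show ?thesis .
qed

theorem lemma4p6:
  fixes d a b :: nat and \<theta> :: real
  assumes "d > 0" and "a > 0" and "b > 0"
    and "(real a + real d) / real d \<ge> 3 * ((real d + 2 * real b) / real d)"
    and "0 \<le> \<theta>" and "\<theta> \<le> pi / 2"
  shows "\<exists>!u. u > 0 \<and>
      Phi d a b (complex_of_real ((real d + 2 * real b) / real d) + complex_of_real u * cis \<theta>) = 0
    \<and> (\<forall>v. 0 < v \<and> v < u \<longrightarrow>
          Phi d a b (complex_of_real ((real d + 2 * real b) / real d) + complex_of_real v * cis \<theta>) > 0)
    \<and> (\<forall>v. v > u \<longrightarrow>
          Phi d a b (complex_of_real ((real d + 2 * real b) / real d) + complex_of_real v * cis \<theta>) < 0)"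
proof -
  define r R where "r = (real d + 2 * real b) / real d" and "R = (real a + real d) / real d"
  let ?Phi = "\<lambda>u. Phi d a b (complex_of_real r + complex_of_real u * cis \<theta>)"
  have r: "r > 1" using assms by (simp add: r_def field_simps)
  have R: "R \<ge> 3*r" using assms(4) by (simp add: r_def R_def)
  have c: "0 \<le> cos \<theta>" using assms(5,6) by (intro cos_ge_zero) auto
  have "crosses_zero_at ?Phi u \<longleftrightarrow> crosses_zero_at (psi r R (cos \<theta>)) u" for u
    using Phi_ray_eq_psi[OF assms(1,3) _ c] assms(1)
    by (intro crosses_zero_at_scale[of "real d / 2"]) (auto simp: r_def R_def)
  with psi_crosses_zero_once[OF r R c cos_le_one] have "\<exists>!u. crosses_zero_at ?Phi u" by simp
  then show ?thesis by (simp add: crosses_zero_at_def r_def)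
qed

end
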